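(* Let $U\ge 2$ and let $X\subseteq\{-U,\dots,U\}$ be a set of nonzero integers. Then $$\sum_{x,y\in X}\frac{1}{H(\frac xy)}\le O(U\log U).$$
   Context: For a nonzero rational $q$, its height $H(q)$ is $\max(|a|,|b|)$ where $q=\frac ab$ with $a,b$ coprime integers. The $O(\cdot)$ hides an absolute constant. *)

theory Defs
  imports Complex_Main
begin

definition height :: "rat \<Rightarrow> int" where
  "height q = (case quotient_of q of (a, b) \<Rightarrow> max \<bar>a\<bar> \<bar>b\<bar>)"

end

theory Submission
  imports Defs "HOL-Analysis.Harmonic_Numbers"
begin

text \<open>For nonzero x, y one has 1/H(x/y) = gcd(x,y)/max(|x|,|y|), so with n = \<lfloor>U\<rfloor> and by
  symmetry it suffices to bound the sum of gcd(a,b)/max(a,b) over 1 \<le> a, b \<le> n. Grouping the pairs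
  by d = gcd(a,b) and writing a = d a', b = d b' turns the d-th group into a sum of 1/max(a',b') over
  a', b' \<le> n/d, which is at most 2n/d. Summing over d gives 2n H_n \<le> 2n (1 + ln n).\<close>

lemma height_of_int_div_of_int:
  fixes x y :: int
  assumes "y \<noteq> 0"
  shows "height (of_int x / of_int y) = max \<bar>x\<bar> \<bar>y\<bar> div gcd x y"
proof -
  define g where "g = gcd x y"
  \<comment> \<open>quotient_of (Fract x y) = Rat.normalize (x, y) divides by gcd x y carrying the sign of y\<close>
  obtain c where c: "quotient_of (of_int x / of_int y) = (x div c, y div c)" "\<bar>c\<bar> = g"
    using assms by (cases "y > 0")
      (auto simp: Fract_of_int_quotient[symmetric] quotient_of_Fract Rat.normalize_def Let_def g_def)
  have "c dvd x" "c dvd y"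
    using c(2) unfolding g_def by (metis abs_dvd_iff gcd_dvd1, metis abs_dvd_iff gcd_dvd2)
  then have "height (of_int x / of_int y) = max (\<bar>x\<bar> div g) (\<bar>y\<bar> div g)"
    using c by (simp add: height_def abs_div)
  also have "\<dots> = max \<bar>x\<bar> \<bar>y\<bar> div g"
    using assms by (intro max_of_mono) (auto simp: mono_def g_def intro: zdiv_mono1)
  finally show ?thesis unfolding g_def .
qed

lemma inverse_height_of_int_div_of_int:
  fixes x y :: int
  assumes "y \<noteq> 0"
  shows "1 / real_of_int (height (of_int x / of_int y)) = real_of_int (gcd x y) / real_of_int (max \<bar>x\<bar> \<bar>y\<bar>)"
proof -
  have "gcd x y dvd max \<bar>x\<bar> \<bar>y\<bar>"
    by (simp add: max_def)
  then show ?thesis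
    using assms by (simp add: height_of_int_div_of_int real_of_int_div)
qed

lemma sum_nonzero_abs:
  fixes f :: "int \<Rightarrow> 'a::comm_semiring_1"
  shows "(\<Sum>x\<in>{-int n..int n} - {0}. f \<bar>x\<bar>) = 2 * (\<Sum>k=1..n. f (int k))"
proof -
  have split: "{-int n..int n} - {0} = int ` {1..n} \<union> (\<lambda>k. - int k) ` {1..n}"
  proof (intro set_eqI iffI)
    fix x assume "x \<in> {-int n..int n} - {0}"
    then show "x \<in> int ` {1..n} \<union> (\<lambda>k. - int k) ` {1..n}"
      by (cases "x > 0") (auto simp: image_iff intro!: bexI[of _ "nat \<bar>x\<bar>"])
  qed auto
  have "(\<Sum>x\<in>{-int n..int n} - {0}. f \<bar>x\<bar>)
      = (\<Sum>x\<in>int ` {1..n}. f \<bar>x\<bar>) + (\<Sum>x\<in>(\<lambda>k. - int k) ` {1..n}. f \<bar>x\<bar>)"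
    unfolding split by (rule sum.union_disjoint) auto
  also have "\<dots> = 2 * (\<Sum>k=1..n. f (int k))"
    by (simp add: sum.reindex inj_on_def mult_2)
  finally show ?thesis .
qed

lemma sum_inverse_max_le:
  "(\<Sum>a=1..n. \<Sum>b=1..n. 1 / real (max a b)) \<le> 2 * real n"
proof (induction n)
  case (Suc n)
  have row: "(\<Sum>a=1..n. 1 / real (max a (Suc n))) = real n / real (Suc n)"
   and col: "(\<Sum>b=1..n. 1 / real (max (Suc n) b)) = real n / real (Suc n)"
    by (simp_all add: max_absorb2 max_absorb1)
  have "(\<Sum>a=1..Suc n. \<Sum>b=1..Suc n. 1 / real (max a b))
      = (\<Sum>a=1..n. \<Sum>b=1..n. 1 / real (max a b)) + (2 * real n + 1) / real (Suc n)"
    by (simp add: sum.distrib row col, simp add: field_simps)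
  also have "\<dots> \<le> 2 * real (Suc n)"
  proof -
    have "(2 * real n + 1) / real (Suc n) \<le> 2" by (simp add: field_simps)
    with Suc.IH show ?thesis by simp
  qed
  finally show ?case .
qed simp

lemma sum_gcd_div_max_le_sum_by_gcd:
  "(\<Sum>a=1..n. \<Sum>b=1..n. real (gcd a b) / real (max a b))
     \<le> (\<Sum>d=1..n. \<Sum>a=1..n div d. \<Sum>b=1..n div d. 1 / real (max a b))"
proof -
  define S where "S = {1..n} \<times> {1..n}"
  define reduce where "reduce = (\<lambda>(a::nat, b::nat). (gcd a b, a div gcd a b, b div gcd a b))"
  define G where "G = (\<lambda>(d::nat, a::nat, b::nat). 1 / real (max a b))"
  have summand_eq: "real (gcd a b) / real (max a b) = G (reduce (a, b))" if "(a, b) \<in> S" for a b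
  proof -
    have "max a b = gcd a b * max (a div gcd a b) (b div gcd a b)"
      by (simp add: nat_mult_max_right)
    then show ?thesis
      using that by (simp add: G_def reduce_def S_def)
  qed
  have "inj_on reduce S"
    by (rule inj_on_inverseI[where g = "\<lambda>(d, a, b). (d * a, d * b)"]) (auto simp: reduce_def)
  then have "(\<Sum>p\<in>S. G (reduce p)) = sum G (reduce ` S)"
    by (simp add: sum.reindex)
  also have "\<dots> \<le> sum G (Sigma {1..n} (\<lambda>d. {1..n div d} \<times> {1..n div d}))"
    by (rule sum_mono2) (auto simp: G_def reduce_def S_def div_le_mono Suc_le_eq div_greater_zero_iff
        intro: order_trans[OF gcd_le1_nat])
  finally have "(\<Sum>p\<in>S. G (reduce p)) \<le> sum G (Sigma {1..n} (\<lambda>d. {1..n div d} \<times> {1..n div d}))" .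
  then show ?thesis
    by (simp add: sum.cartesian_product sum.Sigma summand_eq S_def G_def case_prod_beta)
qed

lemma sum_gcd_div_max_le:
  "(\<Sum>a=1..n. \<Sum>b=1..n. real (gcd a b) / real (max a b)) \<le> 2 * real n * harm n"
proof -
  have "(\<Sum>a=1..n. \<Sum>b=1..n. real (gcd a b) / real (max a b))
      \<le> (\<Sum>d=1..n. \<Sum>a=1..n div d. \<Sum>b=1..n div d. 1 / real (max a b))"
    by (rule sum_gcd_div_max_le_sum_by_gcd)
  also have "\<dots> \<le> (\<Sum>d=1..n. 2 * (real n / real d))"
    by (intro sum_mono order_trans[OF sum_inverse_max_le] mult_left_mono) (simp_all add: of_nat_div_le_of_nat)
  also have "\<dots> = 2 * real n * harm n"
    by (simp add: harm_def sum_distrib_left divide_inverse mult.assoc)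
  finally show ?thesis .
qed

lemma harm_le_one_plus_ln: "n > 0 \<Longrightarrow> harm n \<le> 1 + ln (real n)"
  using euler_mascheroni_sequence_decreasing[of 1 n] by (simp add: harm_def)

lemma mult_harm_le_ln:
  assumes "n \<ge> 2" "real n \<le> U"
  shows "real n * harm n \<le> 5 / 2 * U * ln U"
proof -
  have "ln 2 \<le> ln U"
    using assms by simp
  then have "1 \<le> 3 / 2 * ln U"
    using ln2_ge_two_thirds by simp
  moreover have "harm n \<le> 1 + ln U"
  proof -
    have "ln (real n) \<le> ln U"
      using assms by simp
    then show ?thesis
      using harm_le_one_plus_ln[of n] assms by linarith
  qed
  ultimately have "harm n \<le> 5 / 2 * ln U"
    by simp
  then have "real n * harm n \<le> U * (5 / 2 * ln U)"
    using assms by (intro mult_mono) (auto simp: harm_nonneg)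
  then show ?thesis
    by (simp add: mult_ac)
qed

lemma sum_inverse_height_le:
  fixes X :: "int set"
  assumes X: "X \<subseteq> {-int n..int n} - {0}"
  shows "(\<Sum>x\<in>X. \<Sum>y\<in>X. 1 / real_of_int (height (of_int x / of_int y))) \<le> 8 * real n * harm n"
proof -
  define A where "A = {-int n..int n} - {0}"
  define K where "K = (\<lambda>a b::int. real_of_int (gcd a b) / real_of_int (max a b))"
  have "(\<Sum>x\<in>X. \<Sum>y\<in>X. 1 / real_of_int (height (of_int x / of_int y)))
      = (\<Sum>x\<in>X. \<Sum>y\<in>X. K \<bar>x\<bar> \<bar>y\<bar>)"
    using X by (intro sum.cong refl) (simp add: K_def inverse_height_of_int_div_of_int subset_iff)
  also have "\<dots> \<le> (\<Sum>x\<in>A. \<Sum>y\<in>A. K \<bar>x\<bar> \<bar>y\<bar>)"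
    unfolding sum.cartesian_product using X by (intro sum_mono2) (auto simp: A_def K_def)
  also have "\<dots> = (\<Sum>x\<in>A. 2 * (\<Sum>b=1..n. K \<bar>x\<bar> (int b)))"
    unfolding A_def by (rule sum.cong[OF refl sum_nonzero_abs])
  also have "\<dots> = 2 * (\<Sum>a=1..n. 2 * (\<Sum>b=1..n. K (int a) (int b)))"
    unfolding A_def by (rule sum_nonzero_abs)
  also have "\<dots> = 4 * (\<Sum>a=1..n. \<Sum>b=1..n. real (gcd a b) / real (max a b))"
    by (simp add: K_def sum_distrib_left flip: of_nat_max)
  also have "\<dots> \<le> 8 * real n * harm n"
    using sum_gcd_div_max_le[of n] by linarith
  finally show ?thesis .
qed

theorem lemma11p4:
  "\<exists>C::real. \<forall>(U::real) (X::int set).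
     U \<ge> 2 \<longrightarrow> X \<subseteq> {x. x \<noteq> 0 \<and> real_of_int \<bar>x\<bar> \<le> U} \<longrightarrow>
     (\<Sum>x\<in>X. \<Sum>y\<in>X. 1 / real_of_int (height (of_int x / of_int y))) \<le> C * U * ln U"
proof (intro exI allI impI)
  fix U :: real and X :: "int set"
  assume U: "U \<ge> 2" and X: "X \<subseteq> {x. x \<noteq> 0 \<and> real_of_int \<bar>x\<bar> \<le> U}"
  define n where "n = nat \<lfloor>U\<rfloor>"
  have n: "n \<ge> 2" "real n \<le> U"
    using U by (simp_all add: n_def le_nat_iff le_floor_iff)
  have "X \<subseteq> {-int n..int n} - {0}"
  proof
    fix x assume "x \<in> X"
    with X have "x \<noteq> 0" "\<bar>x\<bar> \<le> \<lfloor>U\<rfloor>" by (auto simp: le_floor_iff)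
    then show "x \<in> {-int n..int n} - {0}" using U by (auto simp: n_def)
  qed
  then have "(\<Sum>x\<in>X. \<Sum>y\<in>X. 1 / real_of_int (height (of_int x / of_int y))) \<le> 8 * real n * harm n"
    by (rule sum_inverse_height_le)
  also have "\<dots> \<le> 20 * U * ln U"
    using mult_harm_le_ln[OF n] by linarith
  finally show "(\<Sum>x\<in>X. \<Sum>y\<in>X. 1 / real_of_int (height (of_int x / of_int y))) \<le> 20 * U * ln U" .
qed

end
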